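(* Let $G$ be a triangle-free graph. If $G\in\mathcal U$, then no vertex of $G$ is adjacent to more than one support vertex.
   Context: All graphs are finite and simple. A set $P\subseteq V(G)$ is an open packing if no two distinct vertices of $P$ have a common neighbor; it is maximal if maximal under inclusion among open packings. $\rho^o(G)$ is the maximum size of an open packing and $\rho^o_L(G)$ the minimum size of a maximal open packing; $\mathcal U$ is the class of graphs with $\rho^o_L(G)=\rho^o(G)$. A leaf is a vertex of degree $1$; a support vertex is a vertex adjacent to at least one leaf. *)

theory Defs
  imports Main
begin

definition simple_graph :: "'a set \<Rightarrow> ('a \<Rightarrow> 'a \<Rightarrow> bool) \<Rightarrow> bool" where
  "simple_graph V E \<longleftrightarrow> finite V \<and> (\<forall>u v. E u v \<longrightarrow> u \<in> V \<and> v \<in> V)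
     \<and> (\<forall>u v. E u v \<longrightarrow> E v u) \<and> (\<forall>v. \<not> E v v)"

definition nbr :: "'a set \<Rightarrow> ('a \<Rightarrow> 'a \<Rightarrow> bool) \<Rightarrow> 'a \<Rightarrow> 'a set" where
  "nbr V E v = {u \<in> V. E v u}"

definition triangle_free :: "'a set \<Rightarrow> ('a \<Rightarrow> 'a \<Rightarrow> bool) \<Rightarrow> bool" where
  "triangle_free V E \<longleftrightarrow> \<not> (\<exists>x\<in>V. \<exists>y\<in>V. \<exists>z\<in>V. E x y \<and> E y z \<and> E x z)"

definition open_packing :: "'a set \<Rightarrow> ('a \<Rightarrow> 'a \<Rightarrow> bool) \<Rightarrow> 'a set \<Rightarrow> bool" where
  "open_packing V E P \<longleftrightarrow> P \<subseteq> V \<and>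
     (\<forall>x\<in>P. \<forall>y\<in>P. x \<noteq> y \<longrightarrow> nbr V E x \<inter> nbr V E y = {})"

definition maximal_open_packing :: "'a set \<Rightarrow> ('a \<Rightarrow> 'a \<Rightarrow> bool) \<Rightarrow> 'a set \<Rightarrow> bool" where
  "maximal_open_packing V E P \<longleftrightarrow> open_packing V E P \<and>
     (\<forall>Q. open_packing V E Q \<and> P \<subseteq> Q \<longrightarrow> Q = P)"

definition rho_o :: "'a set \<Rightarrow> ('a \<Rightarrow> 'a \<Rightarrow> bool) \<Rightarrow> nat" where
  "rho_o V E = Max (card ` {P. open_packing V E P})"

definition rho_oL :: "'a set \<Rightarrow> ('a \<Rightarrow> 'a \<Rightarrow> bool) \<Rightarrow> nat" where
  "rho_oL V E = Min (card ` {P. maximal_open_packing V E P})"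

definition in_U :: "'a set \<Rightarrow> ('a \<Rightarrow> 'a \<Rightarrow> bool) \<Rightarrow> bool" where
  "in_U V E \<longleftrightarrow> rho_oL V E = rho_o V E"

definition leaf :: "'a set \<Rightarrow> ('a \<Rightarrow> 'a \<Rightarrow> bool) \<Rightarrow> 'a \<Rightarrow> bool" where
  "leaf V E v \<longleftrightarrow> v \<in> V \<and> card (nbr V E v) = 1"

definition support_vertex :: "'a set \<Rightarrow> ('a \<Rightarrow> 'a \<Rightarrow> bool) \<Rightarrow> 'a \<Rightarrow> bool" where
  "support_vertex V E v \<longleftrightarrow> v \<in> V \<and> (\<exists>u \<in> nbr V E v. leaf V E u)"

end

theory Submission
  imports Defs
begin

text \<open>Suppose a vertex v has two distinct support neighbours s1, s2, with leaves l1, l2.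
Extend {v} to a maximal open packing Q. Since N(l1) = {s1} and N(l2) = {s2} are disjoint
subsets of N(v), exchanging v for l1 and l2 gives an open packing of size |Q| + 1, so
rho_oL \<le> |Q| < rho_o.\<close>

lemma leaf_nbr_eq:
  assumes "simple_graph V E" "leaf V E l" "E s l"
  shows "nbr V E l = {s}"
proof -
  have "s \<in> nbr V E l" using assms(1,3) by (auto simp: simple_graph_def nbr_def)
  moreover obtain x where "nbr V E l = {x}"
    using assms(2) card_1_singletonE by (auto simp: leaf_def)
  ultimately show ?thesis by auto
qed

lemma finite_open_packings:
  assumes "simple_graph V E"
  shows "finite {P. open_packing V E P}"
proof -
  have "{P. open_packing V E P} \<subseteq> Pow V" by (auto simp: open_packing_def)
  moreover have "finite (Pow V)" using assms by (simp add: simple_graph_def)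
  ultimately show ?thesis by (rule finite_subset)
qed

lemma finite_open_packing:
  assumes "simple_graph V E" "open_packing V E P"
  shows "finite P"
proof -
  have "P \<subseteq> V" "finite V" using assms by (auto simp: simple_graph_def open_packing_def)
  then show ?thesis by (rule finite_subset)
qed

lemma card_open_packing_le:
  assumes "simple_graph V E" "open_packing V E P"
  shows "card P \<le> card V"
  using assms by (intro card_mono) (auto simp: simple_graph_def open_packing_def)

lemma card_le_rho_o:
  assumes "simple_graph V E" "open_packing V E P"
  shows "card P \<le> rho_o V E"
  unfolding rho_o_def using finite_open_packings[OF assms(1)] assms(2) by simp

lemma rho_oL_le_card:
  assumes "simple_graph V E" "maximal_open_packing V E P"
  shows "rho_oL V E \<le> card P"
proof -
  have "finite {P. maximal_open_packing V E P}"
    using finite_open_packings[OF assms(1)]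
    by (rule finite_subset[rotated]) (auto simp: maximal_open_packing_def)
  then show ?thesis unfolding rho_oL_def using assms(2) by simp
qed

text \<open>A largest open packing containing A is maximal, since every larger one also contains A.\<close>
lemma open_packing_extends_to_maximal:
  assumes "simple_graph V E" "open_packing V E A"
  obtains Q where "maximal_open_packing V E Q" "A \<subseteq> Q"
proof -
  have "\<exists>Q. (open_packing V E Q \<and> A \<subseteq> Q) \<and>
      (\<forall>P. open_packing V E P \<and> A \<subseteq> P \<longrightarrow> card P \<le> card Q)"
    using assms card_open_packing_le[OF assms(1)]
    by (intro ex_has_greatest_nat[where b = "Suc (card V)"]) (auto simp: less_Suc_eq_le)
  then obtain Q where Q: "open_packing V E Q" "A \<subseteq> Q"
    and Q_max: "\<And>P. open_packing V E P \<Longrightarrow> A \<subseteq> P \<Longrightarrow> card P \<le> card Q"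
    by blast
  have "maximal_open_packing V E Q"
    unfolding maximal_open_packing_def
  proof (intro conjI allI impI)
    fix R assume R: "open_packing V E R \<and> Q \<subseteq> R"
    then have "finite R" using finite_open_packing[OF assms(1)] by blast
    moreover have "card R \<le> card Q" using R Q(2) Q_max by blast
    ultimately show "R = Q" using R card_seteq by blast
  qed (rule Q(1))
  with Q(2) that show ?thesis by blast
qed

lemma open_packing_exchange:
  assumes "open_packing V E Q" "v \<in> Q" "open_packing V E L"
    and "\<And>l. l \<in> L \<Longrightarrow> nbr V E l \<subseteq> nbr V E v"
  shows "open_packing V E (Q - {v} \<union> L)"
  unfolding open_packing_def
proof (intro conjI ballI impI)
  have Q_disj: "nbr V E x \<inter> nbr V E y = {}" if "x \<in> Q" "y \<in> Q" "x \<noteq> y" for x y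
    using assms(1) that unfolding open_packing_def by blast
  have L_disj: "nbr V E x \<inter> nbr V E y = {}" if "x \<in> L" "y \<in> L" "x \<noteq> y" for x y
    using assms(3) that unfolding open_packing_def by blast
  have cross: "nbr V E l \<inter> nbr V E q = {}" if "l \<in> L" "q \<in> Q - {v}" for l q
    using Q_disj[of q v] assms(2,4) that by blast
  show "Q - {v} \<union> L \<subseteq> V" using assms(1,3) by (auto simp: open_packing_def)
  fix x y assume "x \<in> Q - {v} \<union> L" "y \<in> Q - {v} \<union> L" "x \<noteq> y"
  then consider "x \<in> Q" "y \<in> Q" | "x \<in> L" "y \<in> L" | "x \<in> L" "y \<in> Q - {v}" | "x \<in> Q - {v}" "y \<in> L"
    by blast
  then show "nbr V E x \<inter> nbr V E y = {}"
  proof cases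
    case 1 then show ?thesis using Q_disj \<open>x \<noteq> y\<close> by blast
  next
    case 2 then show ?thesis using L_disj \<open>x \<noteq> y\<close> by blast
  next
    case 3 then show ?thesis using cross by blast
  next
    case 4 then show ?thesis using cross by blast
  qed
qed

lemma rho_oL_less_rho_o_if_two_support_nbrs:
  assumes G: "simple_graph V E" and "v \<in> V"
    and s: "s1 \<in> nbr V E v" "s2 \<in> nbr V E v" "s1 \<noteq> s2"
    and "support_vertex V E s1" "support_vertex V E s2"
  shows "rho_oL V E < rho_o V E"
proof -
  obtain l1 l2 where l: "leaf V E l1" "leaf V E l2" "E s1 l1" "E s2 l2"
    using assms(6,7) by (auto simp: support_vertex_def nbr_def)
  have nbr_l: "nbr V E l1 = {s1}" "nbr V E l2 = {s2}"
    using leaf_nbr_eq[OF G] l by auto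
  have "open_packing V E {v}" using \<open>v \<in> V\<close> by (simp add: open_packing_def)
  then obtain Q where Q: "maximal_open_packing V E Q" and "v \<in> Q"
    using open_packing_extends_to_maximal[OF G] by blast
  have Q_op: "open_packing V E Q" using Q by (simp add: maximal_open_packing_def)
  define L where "L = {l1, l2}"
  have L_op: "open_packing V E L" using l s nbr_l by (auto simp: L_def open_packing_def leaf_def)
  have L_nbr: "nbr V E l \<subseteq> nbr V E v" if "l \<in> L" for l
    using that s nbr_l by (auto simp: L_def)
  have L_Q: "L \<inter> Q = {}"
  proof -
    have "l \<notin> Q" if "l \<in> L" for l
    proof
      assume "l \<in> Q"
      have "l \<noteq> v" using that s nbr_l by (auto simp: L_def)
      then have "nbr V E l \<inter> nbr V E v = {}"
        using Q_op \<open>l \<in> Q\<close> \<open>v \<in> Q\<close> by (auto simp: open_packing_def)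
      then show False using L_nbr[OF that] that nbr_l by (auto simp: L_def)
    qed
    then show ?thesis by blast
  qed
  have "finite Q" using finite_open_packing[OF G Q_op] .
  have "l1 \<noteq> l2" using nbr_l s(3) by auto
  then have "card L = 2" by (simp add: L_def)
  have "card (Q - {v} \<union> L) = card (Q - {v}) + card L"
    using \<open>finite Q\<close> L_Q by (intro card_Un_disjoint) (auto simp: L_def)
  also have "\<dots> = card Q + 1"
    using \<open>card L = 2\<close> \<open>finite Q\<close> \<open>v \<in> Q\<close> card_Diff1_less[of Q v] by (simp add: card_Diff_singleton)
  finally have "card (Q - {v} \<union> L) = card Q + 1" .
  moreover have "card (Q - {v} \<union> L) \<le> rho_o V E"
    using card_le_rho_o[OF G open_packing_exchange[OF Q_op \<open>v \<in> Q\<close> L_op L_nbr]] .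
  moreover have "rho_oL V E \<le> card Q" using rho_oL_le_card[OF G Q] .
  ultimately show ?thesis by linarith
qed

theorem lemma1:
  fixes V :: "'a set" and E :: "'a \<Rightarrow> 'a \<Rightarrow> bool"
  assumes "simple_graph V E"
    and "triangle_free V E"
    and "in_U V E"
  shows "\<forall>v\<in>V. card {u \<in> nbr V E v. support_vertex V E u} \<le> 1"
proof
  fix v assume "v \<in> V"
  have "finite {u \<in> nbr V E v. support_vertex V E u}"
    using assms(1) by (simp add: simple_graph_def nbr_def)
  moreover have "s1 = s2" if "s1 \<in> nbr V E v" "s2 \<in> nbr V E v"
    "support_vertex V E s1" "support_vertex V E s2" for s1 s2
    using rho_oL_less_rho_o_if_two_support_nbrs[OF assms(1) \<open>v \<in> V\<close> that(1,2) _ that(3,4)] assms(3)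
    by (auto simp: in_U_def)
  ultimately show "card {u \<in> nbr V E v. support_vertex V E u} \<le> 1"
    by (auto simp: card_le_Suc0_iff_eq)
qed

end
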